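(* Let $\mathscr{O}$ be a reduced operad in $\mathbbm{k}$-vector spaces with $\mathscr{O}(1)=\mathbbm{k}$ (generated by the unit), and let $\mu\in\mathscr{O}(2)$ satisfy the right Leibniz condition. Then the image of the functor $\alpha:{\bm{\Sigma}}\text{-mod}\to\mathcal{F}_{\mathscr{O}}$ lies in $\mathcal{F}^\mu_{\mathscr{O}}$. In particular, every simple object of $\mathcal{F}_{\mathscr{O}}$ belongs to $\mathcal{F}^\mu_{\mathscr{O}}$.
   Context: Reduced means $\mathscr{O}(0)=0$. $\mathbf{Cat}\,\mathscr{O}$ is the $\mathbbm{k}$-linear PROP with objects $\mathbb{N}$ and $\mathbf{Cat}\,\mathscr{O}(m,n)=\bigoplus_{f:\{1..m\}\to\{1..n\}}\bigotimes_{i}\mathscr{O}(|f^{-1}(i)|)$, with $\boxplus$ addition on objects; $\mathcal{F}_{\mathscr{O}}$ is the category of $\mathbbm{k}$-linear functors $\mathbf{Cat}\,\mathscr{O}\to\mathbbm{k}$-vector spaces. ${\bm{\Sigma}}$-mod is the category of functors from finite sets and bijections to $\mathbbm{k}$-vector spaces. $\alpha$ sends a ${\bm{\Sigma}}$-module $M$ to the functor $n\mapsto M(n)$ on which $\mathbf{Cat}\,\mathscr{O}(n,n)\cong\mathbbm{k}[\mathfrak{S}_n]$ acts via the $\mathfrak{S}_n$-action and all morphisms in $\mathbf{Cat}\,\mathscr{O}(s,t)$ with $s\ne t$ act by zero (restriction along the augmentation $\mathscr{O}\to I$ to the unit operad). $\delta F(n)=F(n+1)$ with $\xi$ acting by $F(\xi\boxplus\mathrm{Id}_1)$.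 For $1\le i\le n$, $\mu_i(n)\in\mathbf{Cat}\,\mathscr{O}(n+1,n)$ is given by the map $j\mapsto j$ ($j\le n$), $n+1\mapsto i$, identity on singleton fibres and $\mu$ with inputs $(i,n+1)$ on the fibre over $i$; $\widetilde\mu_F(n)=F(\sum_i\mu_i(n)):\delta F(n)\to F(n)$. The right Leibniz condition: for all $n$ and $\nu\in\mathscr{O}(n)$, $\mu\circ(\nu\boxplus\mathrm{Id}_1)=\nu\circ\sum_{i=1}^n\mu_i(n)$ in $\mathscr{O}(n+1)$; under it $\widetilde\mu_F:\delta F\to F$ is natural. $\mathcal{F}^\mu_{\mathscr{O}}$ is the full subcategory of $F$ with $\widetilde\mu_F=0$. *)

theory Defs
  imports Complex_Main
begin

(* An operad in k-vector spaces, presented in its (equivalent) species form: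
   components O(S) for finite label sets S (of naturals), relabelling along
   injections (bijections onto the image), and full composition
   O(T) x prod_{t in T} O(S_t) -> O(disjoint union of the S_t). *)
record ('k, 'o) operad =
  osc   :: "'k \<Rightarrow> 'o \<Rightarrow> 'o"
  ocar  :: "nat set \<Rightarrow> 'o set"
  ocomp :: "nat set \<Rightarrow> (nat \<Rightarrow> nat set) \<Rightarrow> 'o \<Rightarrow> (nat \<Rightarrow> 'o) \<Rightarrow> 'o"
  orel  :: "nat set \<Rightarrow> (nat \<Rightarrow> nat) \<Rightarrow> 'o \<Rightarrow> 'o"
  ounit :: "nat \<Rightarrow> 'o"

definition lin_on :: "('k \<Rightarrow> 'a::plus \<Rightarrow> 'a) \<Rightarrow> ('k \<Rightarrow> 'b::plus \<Rightarrow> 'b) \<Rightarrow> 'a set \<Rightarrow> ('a \<Rightarrow> 'b) \<Rightarrow> bool"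
  where "lin_on s1 s2 A f \<longleftrightarrow>
    (\<forall>x\<in>A. \<forall>y\<in>A. f (x + y) = f x + f y) \<and> (\<forall>c. \<forall>x\<in>A. f (s1 c x) = s2 c (f x))"

definition pdisj :: "nat set \<Rightarrow> (nat \<Rightarrow> nat set) \<Rightarrow> bool"
  where "pdisj T Sf \<longleftrightarrow> (\<forall>t\<in>T. \<forall>u\<in>T. t \<noteq> u \<longrightarrow> Sf t \<inter> Sf u = {})"

definition comp_ok :: "('k, 'o) operad \<Rightarrow> nat set \<Rightarrow> (nat \<Rightarrow> nat set) \<Rightarrow> 'o \<Rightarrow> (nat \<Rightarrow> 'o) \<Rightarrow> bool"
  where "comp_ok P T Sf \<nu> \<nu>s \<longleftrightarrow> finite T \<and> (\<forall>t\<in>T. finite (Sf t)) \<and> pdisj T Sf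
     \<and> \<nu> \<in> ocar P T \<and> (\<forall>t\<in>T. \<nu>s t \<in> ocar P (Sf t))"

definition is_operad :: "('k::field, 'o::ab_group_add) operad \<Rightarrow> bool"
  where "is_operad P \<longleftrightarrow>
    vector_space (osc P)
  \<and> (\<forall>S. finite S \<longrightarrow> module.subspace (osc P) (ocar P S))
  \<comment> \<open>relabelling: a linear functor from finite sets and bijections\<close>
  \<and> (\<forall>S \<sigma>. finite S \<longrightarrow> inj_on \<sigma> S \<longrightarrow>
        (\<forall>x\<in>ocar P S. orel P S \<sigma> x \<in> ocar P (\<sigma> ` S)) \<and> lin_on (osc P) (osc P) (ocar P S) (orel P S \<sigma>))
  \<and> (\<forall>S \<sigma> \<sigma>'. finite S \<longrightarrow> (\<forall>s\<in>S. \<sigma> s = \<sigma>' s) \<longrightarrow> (\<forall>x\<in>ocar P S. orel P S \<sigma> x = orel P S \<sigma>' x))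
  \<and> (\<forall>S. finite S \<longrightarrow> (\<forall>x\<in>ocar P S. orel P S id x = x))
  \<and> (\<forall>S \<sigma> \<tau>. finite S \<longrightarrow> inj_on \<sigma> S \<longrightarrow> inj_on \<tau> (\<sigma> ` S) \<longrightarrow>
        (\<forall>x\<in>ocar P S. orel P (\<sigma> ` S) \<tau> (orel P S \<sigma> x) = orel P S (\<tau> \<circ> \<sigma>) x))
  \<comment> \<open>composition: well-defined, local and multilinear\<close>
  \<and> (\<forall>T Sf \<nu> \<nu>s. comp_ok P T Sf \<nu> \<nu>s \<longrightarrow> ocomp P T Sf \<nu> \<nu>s \<in> ocar P (\<Union>t\<in>T. Sf t))
  \<and> (\<forall>T Sf Sf' \<nu> \<nu>s \<nu>s'. comp_ok P T Sf \<nu> \<nu>s \<longrightarrow> (\<forall>t\<in>T. Sf t = Sf' t \<and> \<nu>s t = \<nu>s' t) \<longrightarrow>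
        ocomp P T Sf' \<nu> \<nu>s' = ocomp P T Sf \<nu> \<nu>s)
  \<and> (\<forall>T Sf a b \<nu>s c. comp_ok P T Sf a \<nu>s \<longrightarrow> b \<in> ocar P T \<longrightarrow>
        ocomp P T Sf (osc P c a + b) \<nu>s = osc P c (ocomp P T Sf a \<nu>s) + ocomp P T Sf b \<nu>s)
  \<and> (\<forall>T Sf \<nu> \<nu>s t a b c. comp_ok P T Sf \<nu> \<nu>s \<longrightarrow> t \<in> T \<longrightarrow> a \<in> ocar P (Sf t) \<longrightarrow> b \<in> ocar P (Sf t) \<longrightarrow>
        ocomp P T Sf \<nu> (\<nu>s(t := osc P c a + b)) =
          osc P c (ocomp P T Sf \<nu> (\<nu>s(t := a))) + ocomp P T Sf \<nu> (\<nu>s(t := b)))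
  \<comment> \<open>unit\<close>
  \<and> (\<forall>x. ounit P x \<in> ocar P {x})
  \<and> (\<forall>x \<sigma>. orel P {x} \<sigma> (ounit P x) = ounit P (\<sigma> x))
  \<and> (\<forall>x S \<nu>. finite S \<longrightarrow> \<nu> \<in> ocar P S \<longrightarrow> ocomp P {x} (\<lambda>_. S) (ounit P x) (\<lambda>_. \<nu>) = \<nu>)
  \<and> (\<forall>S \<nu>. finite S \<longrightarrow> \<nu> \<in> ocar P S \<longrightarrow> ocomp P S (\<lambda>s. {s}) \<nu> (ounit P) = \<nu>)
  \<comment> \<open>associativity\<close>
  \<and> (\<forall>T Sf Rf \<nu> \<nu>s \<rho>. comp_ok P T Sf \<nu> \<nu>s \<longrightarrow>
        comp_ok P (\<Union>t\<in>T. Sf t) Rf (ocomp P T Sf \<nu> \<nu>s) \<rho> \<longrightarrow>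
        ocomp P (\<Union>t\<in>T. Sf t) Rf (ocomp P T Sf \<nu> \<nu>s) \<rho> =
        ocomp P T (\<lambda>t. \<Union>s\<in>Sf t. Rf s) \<nu> (\<lambda>t. ocomp P (Sf t) Rf (\<nu>s t) \<rho>))
  \<comment> \<open>equivariance\<close>
  \<and> (\<forall>T Sf \<nu> \<nu>s \<sigma>. comp_ok P T Sf \<nu> \<nu>s \<longrightarrow> inj_on \<sigma> (\<Union>t\<in>T. Sf t) \<longrightarrow>
        orel P (\<Union>t\<in>T. Sf t) \<sigma> (ocomp P T Sf \<nu> \<nu>s) =
        ocomp P T (\<lambda>t. \<sigma> ` Sf t) \<nu> (\<lambda>t. orel P (Sf t) \<sigma> (\<nu>s t)))
  \<and> (\<forall>T Sf \<nu> \<nu>s \<tau>. comp_ok P T Sf \<nu> \<nu>s \<longrightarrow> inj_on \<tau> T \<longrightarrow>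
        ocomp P (\<tau> ` T) (\<lambda>u. Sf (the_inv_into T \<tau> u)) (orel P T \<tau> \<nu>) (\<lambda>u. \<nu>s (the_inv_into T \<tau> u)) =
        ocomp P T Sf \<nu> \<nu>s)"

definition reduced :: "('k, 'o::zero) operad \<Rightarrow> bool"
  where "reduced P \<longleftrightarrow> ocar P {} = {0}"

definition arity_one_unit :: "('k, 'o::zero) operad \<Rightarrow> bool"
  where "arity_one_unit P \<longleftrightarrow> (\<forall>x. ocar P {x} = range (\<lambda>c. osc P c (ounit P x)) \<and> ounit P x \<noteq> 0)"

definition fib :: "nat \<Rightarrow> (nat \<Rightarrow> nat) \<Rightarrow> nat \<Rightarrow> nat set"
  where "fib m f i = {x. x < m \<and> f x = i}"

(* generators (f, (nu_i)_i) of Cat O(m,n): nu_i in O(f^{-1}(i)) *)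
definition gen :: "('k, 'o) operad \<Rightarrow> nat \<Rightarrow> nat \<Rightarrow> (nat \<Rightarrow> nat) \<Rightarrow> (nat \<Rightarrow> 'o) \<Rightarrow> bool"
  where "gen P m n f \<nu>s \<longleftrightarrow> (\<forall>x<m. f x < n) \<and> (\<forall>i<n. \<nu>s i \<in> ocar P (fib m f i))"

(* composition in Cat O: (g, nu') o (f, nu) = (g o f, omega) *)
definition catcomp :: "('k, 'o) operad \<Rightarrow> nat \<Rightarrow> nat \<Rightarrow> (nat \<Rightarrow> nat) \<Rightarrow> (nat \<Rightarrow> 'o)
    \<Rightarrow> (nat \<Rightarrow> nat) \<Rightarrow> (nat \<Rightarrow> 'o) \<Rightarrow> nat \<Rightarrow> 'o"
  where "catcomp P m n g \<nu>s' f \<nu>s = (\<lambda>j. ocomp P (fib n g j) (\<lambda>i. fib m f i) (\<nu>s' j) \<nu>s)"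

(* mu_i(n) : n+1 -> n (0-based, i < n) *)
definition mu_map :: "nat \<Rightarrow> nat \<Rightarrow> nat \<Rightarrow> nat"
  where "mu_map n i = (\<lambda>x. if x < n then x else i)"

definition mu_lab :: "('k, 'o) operad \<Rightarrow> 'o \<Rightarrow> nat \<Rightarrow> nat \<Rightarrow> nat \<Rightarrow> 'o"
  where "mu_lab P \<mu> n i = (\<lambda>j. if j = i then orel P {0, 1} (\<lambda>k. if k = 0 then i else n) \<mu> else ounit P j)"

(* nu boxplus Id_1 : n+1 -> 2 *)
definition plus_map :: "nat \<Rightarrow> nat \<Rightarrow> nat"
  where "plus_map n = (\<lambda>x. if x < n then 0 else 1)"

definition plus_lab :: "('k, 'o) operad \<Rightarrow> 'o \<Rightarrow> nat \<Rightarrow> nat \<Rightarrow> 'o"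
  where "plus_lab P \<nu> n = (\<lambda>j. if j = 0 then \<nu> else ounit P n)"

(* right Leibniz: mu o (nu boxplus Id_1) = nu o sum_i mu_i(n) in O(n+1) *)
definition right_leibniz :: "('k, 'o::comm_monoid_add) operad \<Rightarrow> 'o \<Rightarrow> bool"
  where "right_leibniz P \<mu> \<longleftrightarrow> (\<forall>n. \<forall>\<nu>\<in>ocar P {..<n}.
     catcomp P (n + 1) 2 (\<lambda>_. 0) (\<lambda>_. \<mu>) (plus_map n) (plus_lab P \<nu> n) 0 =
     (\<Sum>i<n. catcomp P (n + 1) n (\<lambda>_. 0) (\<lambda>_. \<nu>) (mu_map n i) (mu_lab P \<mu> n i) 0))"

(* k-linear functors Cat O -> k-Vect: values V n (subspaces of a k-vector space),
   and the action Fm m n f nus of the generator (f, nus) in Cat O(m,n) *)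
definition is_lfun :: "('k::field, 'o::ab_group_add) operad \<Rightarrow> ('k \<Rightarrow> 'v::ab_group_add \<Rightarrow> 'v)
    \<Rightarrow> (nat \<Rightarrow> 'v set) \<Rightarrow> (nat \<Rightarrow> nat \<Rightarrow> (nat \<Rightarrow> nat) \<Rightarrow> (nat \<Rightarrow> 'o) \<Rightarrow> 'v \<Rightarrow> 'v) \<Rightarrow> bool"
  where "is_lfun P scV V Fm \<longleftrightarrow>
    vector_space scV
  \<and> (\<forall>n. module.subspace scV (V n))
  \<and> (\<forall>m n f \<nu>s. gen P m n f \<nu>s \<longrightarrow>
        (\<forall>v\<in>V m. Fm m n f \<nu>s v \<in> V n) \<and> lin_on scV scV (V m) (Fm m n f \<nu>s))
  \<and> (\<forall>m n f f' \<nu>s \<nu>s'. gen P m n f \<nu>s \<longrightarrow> (\<forall>x<m. f x = f' x) \<longrightarrow> (\<forall>i<n. \<nu>s i = \<nu>s' i) \<longrightarrow>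
        (\<forall>v\<in>V m. Fm m n f' \<nu>s' v = Fm m n f \<nu>s v))
  \<and> (\<forall>m n f \<nu>s i c a b. gen P m n f \<nu>s \<longrightarrow> i < n \<longrightarrow> a \<in> ocar P (fib m f i) \<longrightarrow> b \<in> ocar P (fib m f i) \<longrightarrow>
        (\<forall>v\<in>V m. Fm m n f (\<nu>s(i := osc P c a + b)) v =
                  scV c (Fm m n f (\<nu>s(i := a)) v) + Fm m n f (\<nu>s(i := b)) v))
  \<and> (\<forall>n. \<forall>v\<in>V n. Fm n n id (ounit P) v = v)
  \<and> (\<forall>m n p f \<nu>s g \<nu>s'. gen P m n f \<nu>s \<longrightarrow> gen P n p g \<nu>s' \<longrightarrow>
        (\<forall>v\<in>V m. Fm n p g \<nu>s' (Fm m n f \<nu>s v) = Fm m p (g \<circ> f) (catcomp P m n g \<nu>s' f \<nu>s) v))"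

(* tilde mu_F(n) = F(sum_i mu_i(n)) : F(n+1) -> F(n) *)
definition mu_tilde :: "('k, 'o) operad \<Rightarrow> 'o \<Rightarrow> (nat \<Rightarrow> nat \<Rightarrow> (nat \<Rightarrow> nat) \<Rightarrow> (nat \<Rightarrow> 'o) \<Rightarrow> 'v \<Rightarrow> 'v)
    \<Rightarrow> nat \<Rightarrow> 'v \<Rightarrow> 'v::comm_monoid_add"
  where "mu_tilde P \<mu> Fm n v = (\<Sum>i<n. Fm (n + 1) n (mu_map n i) (mu_lab P \<mu> n i) v)"

definition in_Fmu :: "('k::field, 'o::ab_group_add) operad \<Rightarrow> 'o \<Rightarrow> ('k \<Rightarrow> 'v::ab_group_add \<Rightarrow> 'v)
    \<Rightarrow> (nat \<Rightarrow> 'v set) \<Rightarrow> (nat \<Rightarrow> nat \<Rightarrow> (nat \<Rightarrow> nat) \<Rightarrow> (nat \<Rightarrow> 'o) \<Rightarrow> 'v \<Rightarrow> 'v) \<Rightarrow> bool"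
  where "in_Fmu P \<mu> scV V Fm \<longleftrightarrow> is_lfun P scV V Fm \<and> (\<forall>n. \<forall>v\<in>V (n + 1). mu_tilde P \<mu> Fm n v = 0)"

definition is_subfunctor :: "('k::field, 'o) operad \<Rightarrow> ('k \<Rightarrow> 'v::ab_group_add \<Rightarrow> 'v)
    \<Rightarrow> (nat \<Rightarrow> 'v set) \<Rightarrow> (nat \<Rightarrow> nat \<Rightarrow> (nat \<Rightarrow> nat) \<Rightarrow> (nat \<Rightarrow> 'o) \<Rightarrow> 'v \<Rightarrow> 'v) \<Rightarrow> (nat \<Rightarrow> 'v set) \<Rightarrow> bool"
  where "is_subfunctor P scV V Fm W \<longleftrightarrow>
    (\<forall>n. module.subspace scV (W n) \<and> W n \<subseteq> V n)
  \<and> (\<forall>m n f \<nu>s. gen P m n f \<nu>s \<longrightarrow> (\<forall>v\<in>W m. Fm m n f \<nu>s v \<in> W n))"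

definition simple_obj :: "('k::field, 'o::ab_group_add) operad \<Rightarrow> ('k \<Rightarrow> 'v::ab_group_add \<Rightarrow> 'v)
    \<Rightarrow> (nat \<Rightarrow> 'v set) \<Rightarrow> (nat \<Rightarrow> nat \<Rightarrow> (nat \<Rightarrow> nat) \<Rightarrow> (nat \<Rightarrow> 'o) \<Rightarrow> 'v \<Rightarrow> 'v) \<Rightarrow> bool"
  where "simple_obj P scV V Fm \<longleftrightarrow> is_lfun P scV V Fm \<and> (\<exists>n. V n \<noteq> {0})
    \<and> (\<forall>W. is_subfunctor P scV V Fm W \<longrightarrow> (\<forall>n. W n = {0}) \<or> (\<forall>n. W n = V n))"

(* Sigma-modules (skeletal form: S_n-representations M(n)) *)
definition is_sigma_mod :: "('k::field \<Rightarrow> 'v::ab_group_add \<Rightarrow> 'v) \<Rightarrow> (nat \<Rightarrow> 'v set)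
    \<Rightarrow> (nat \<Rightarrow> (nat \<Rightarrow> nat) \<Rightarrow> 'v \<Rightarrow> 'v) \<Rightarrow> bool"
  where "is_sigma_mod scV V act \<longleftrightarrow>
    vector_space scV
  \<and> (\<forall>n. module.subspace scV (V n))
  \<and> (\<forall>n \<sigma>. bij_betw \<sigma> {..<n} {..<n} \<longrightarrow>
        (\<forall>v\<in>V n. act n \<sigma> v \<in> V n) \<and> lin_on scV scV (V n) (act n \<sigma>))
  \<and> (\<forall>n \<sigma> \<sigma>'. (\<forall>x<n. \<sigma> x = \<sigma>' x) \<longrightarrow> (\<forall>v\<in>V n. act n \<sigma> v = act n \<sigma>' v))
  \<and> (\<forall>n. \<forall>v\<in>V n. act n id v = v)
  \<and> (\<forall>n \<sigma> \<tau>. bij_betw \<sigma> {..<n} {..<n} \<longrightarrow> bij_betw \<tau> {..<n} {..<n} \<longrightarrow>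
        (\<forall>v\<in>V n. act n \<sigma> (act n \<tau> v) = act n (\<sigma> \<circ> \<tau>) v))"

(* augmentation O -> I: the scalar c with nu = c * unit, for nu in O({x}) *)
definition aug :: "('k, 'o) operad \<Rightarrow> nat \<Rightarrow> 'o \<Rightarrow> 'k"
  where "aug P x \<nu> = (THE c. \<nu> = osc P c (ounit P x))"

(* alpha(M): restriction along the augmentation O -> I *)
definition alpha :: "('k::field, 'o) operad \<Rightarrow> ('k \<Rightarrow> 'v::zero \<Rightarrow> 'v) \<Rightarrow> (nat \<Rightarrow> (nat \<Rightarrow> nat) \<Rightarrow> 'v \<Rightarrow> 'v)
    \<Rightarrow> nat \<Rightarrow> nat \<Rightarrow> (nat \<Rightarrow> nat) \<Rightarrow> (nat \<Rightarrow> 'o) \<Rightarrow> 'v \<Rightarrow> 'v"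
  where "alpha P scV act m n f \<nu>s v =
    (if m = n \<and> bij_betw f {..<n} {..<n}
     then scV (\<Prod>i<n. aug P (the_inv_into {..<n} f i) (\<nu>s i)) (act n f v)
     else 0)"

end

theory Submission
  imports Defs
begin

(* alpha(M) has nonzero structure maps only between equal arities, so each mu_i(n) : n + 1 -> n
   acts on it by zero; what has to be checked is that alpha(M) is a functor at all. This amounts
   to the augmentation O -> I being multiplicative on composites of bijective generators and
   vanishing on composites that are not bijective: a generator whose map is not surjective has a
   label in O(empty) = 0.
   The same observation makes the truncation of a functor F at arity n (zero above n) a
   subfunctor, since no nonzero morphism of Cat O raises the arity. So a simple F has F(n) = 0 or
   F(n + 1) = 0 for every n, and either way mu_F(n) : F(n + 1) -> F(n) vanishes. *)

lemma operad_vector_space: "is_operad P \<Longrightarrow> vector_space (osc P)"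
  unfolding is_operad_def by (elim conjE)

lemma operad_subspace [rule_format]:
  "is_operad P \<Longrightarrow> \<forall>S. finite S \<longrightarrow> module.subspace (osc P) (ocar P S)"
  unfolding is_operad_def by (elim conjE) assumption

lemma operad_zero_in:
  assumes "is_operad P" "finite S"
  shows "0 \<in> ocar P S"
proof -
  interpret vector_space "osc P" using operad_vector_space[OF assms(1)] .
  show ?thesis using operad_subspace[OF assms] subspace_0 by blast
qed

lemma ounit_in [rule_format]: "is_operad P \<Longrightarrow> \<forall>x. ounit P x \<in> ocar P {x}"
  unfolding is_operad_def by (elim conjE) assumption

lemma orel_in [rule_format]:
  "is_operad P \<Longrightarrow> \<forall>S \<sigma>. finite S \<longrightarrow> inj_on \<sigma> S \<longrightarrow>
     (\<forall>x\<in>ocar P S. orel P S \<sigma> x \<in> ocar P (\<sigma> ` S)) \<and> lin_on (osc P) (osc P) (ocar P S) (orel P S \<sigma>)"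
  unfolding is_operad_def by (elim conjE) assumption

lemma ocomp_linear_left [rule_format]:
  "is_operad P \<Longrightarrow> \<forall>T Sf a b \<nu>s c. comp_ok P T Sf a \<nu>s \<longrightarrow> b \<in> ocar P T \<longrightarrow>
     ocomp P T Sf (osc P c a + b) \<nu>s = osc P c (ocomp P T Sf a \<nu>s) + ocomp P T Sf b \<nu>s"
  unfolding is_operad_def by (elim conjE) assumption

lemma ocomp_linear_right [rule_format]:
  "is_operad P \<Longrightarrow> \<forall>T Sf \<nu> \<nu>s t a b c. comp_ok P T Sf \<nu> \<nu>s \<longrightarrow> t \<in> T \<longrightarrow>
     a \<in> ocar P (Sf t) \<longrightarrow> b \<in> ocar P (Sf t) \<longrightarrow>
     ocomp P T Sf \<nu> (\<nu>s(t := osc P c a + b)) =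
       osc P c (ocomp P T Sf \<nu> (\<nu>s(t := a))) + ocomp P T Sf \<nu> (\<nu>s(t := b))"
  unfolding is_operad_def by (elim conjE) assumption

lemma ocomp_cong [rule_format]:
  "is_operad P \<Longrightarrow> \<forall>T Sf Sf' \<nu> \<nu>s \<nu>s'. comp_ok P T Sf \<nu> \<nu>s \<longrightarrow>
     (\<forall>t\<in>T. Sf t = Sf' t \<and> \<nu>s t = \<nu>s' t) \<longrightarrow> ocomp P T Sf' \<nu> \<nu>s' = ocomp P T Sf \<nu> \<nu>s"
  unfolding is_operad_def by (elim conjE) assumption

lemma ocomp_unit_left [rule_format]:
  "is_operad P \<Longrightarrow> \<forall>x S \<nu>. finite S \<longrightarrow> \<nu> \<in> ocar P S \<longrightarrow>
     ocomp P {x} (\<lambda>_. S) (ounit P x) (\<lambda>_. \<nu>) = \<nu>"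
  unfolding is_operad_def by (elim conjE) assumption

lemma ocomp_zero_right:
  assumes "is_operad P" "comp_ok P T Sf \<nu> \<nu>s" "t \<in> T" "\<nu>s t = 0"
  shows "ocomp P T Sf \<nu> \<nu>s = 0"
proof -
  interpret vector_space "osc P" using operad_vector_space[OF assms(1)] .
  have zero: "0 \<in> ocar P (Sf t)"
    using operad_zero_in[OF assms(1)] assms(2,3) by (simp add: comp_ok_def)
  have "ocomp P T Sf \<nu> (\<nu>s(t := osc P 1 0 + 0)) =
          osc P 1 (ocomp P T Sf \<nu> (\<nu>s(t := 0))) + ocomp P T Sf \<nu> (\<nu>s(t := 0))"
    by (rule ocomp_linear_right[OF assms(1-3) zero zero])
  moreover have "\<nu>s(t := 0) = \<nu>s" using assms(4) by auto
  ultimately show ?thesis by simp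
qed

lemma ocomp_scaled_unit_left:
  assumes "is_operad P" "finite (Sf i)" "\<nu>s i \<in> ocar P (Sf i)"
  shows "ocomp P {i} Sf (osc P c (ounit P i)) \<nu>s = osc P c (\<nu>s i)"
proof -
  interpret vector_space "osc P" using operad_vector_space[OF assms(1)] .
  have zero: "0 \<in> ocar P {i}" using operad_zero_in[OF assms(1)] by simp
  have ok: "comp_ok P {i} Sf (ounit P i) \<nu>s" and ok0: "comp_ok P {i} Sf 0 \<nu>s"
    using assms ounit_in[OF assms(1)] zero by (simp_all add: comp_ok_def pdisj_def)
  have "ocomp P {i} Sf (osc P 1 0 + 0) \<nu>s = osc P 1 (ocomp P {i} Sf 0 \<nu>s) + ocomp P {i} Sf 0 \<nu>s"
    by (rule ocomp_linear_left[OF assms(1) ok0 zero])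
  then have comp_zero: "ocomp P {i} Sf 0 \<nu>s = 0" by simp
  have "ocomp P {i} Sf (ounit P i) \<nu>s = ocomp P {i} (\<lambda>_. Sf i) (ounit P i) (\<lambda>_. \<nu>s i)"
    by (rule ocomp_cong[OF assms(1) ok, symmetric]) simp
  also have "\<dots> = \<nu>s i" by (rule ocomp_unit_left[OF assms])
  finally show ?thesis
    using ocomp_linear_left[OF assms(1) ok zero, of c] comp_zero by simp
qed

lemma aug_scale:
  assumes "is_operad P" "arity_one_unit P"
  shows "aug P x (osc P c (ounit P x)) = c"
proof -
  interpret vector_space "osc P" using operad_vector_space[OF assms(1)] .
  have "ounit P x \<noteq> 0" using assms(2) by (simp add: arity_one_unit_def)
  then show ?thesis unfolding aug_def by (intro the_equality) auto
qed

lemma aug_eq: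
  assumes "is_operad P" "arity_one_unit P" "\<nu> \<in> ocar P {x}"
  shows "\<nu> = osc P (aug P x \<nu>) (ounit P x)"
proof -
  obtain c where "\<nu> = osc P c (ounit P x)" using assms(2,3) by (auto simp: arity_one_unit_def)
  then show ?thesis using aug_scale[OF assms(1,2)] by simp
qed

lemma aug_zero:
  assumes "is_operad P" "arity_one_unit P"
  shows "aug P x 0 = 0"
proof -
  interpret vector_space "osc P" using operad_vector_space[OF assms(1)] .
  show ?thesis using aug_scale[OF assms, of x 0] by simp
qed

lemma aug_unit:
  assumes "is_operad P" "arity_one_unit P"
  shows "aug P x (ounit P x) = 1"
proof -
  interpret vector_space "osc P" using operad_vector_space[OF assms(1)] .
  show ?thesis using aug_scale[OF assms, of x 1] by simp
qed

lemma aug_linear: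
  assumes "is_operad P" "arity_one_unit P" "a \<in> ocar P {x}" "b \<in> ocar P {x}"
  shows "aug P x (osc P c a + b) = c * aug P x a + aug P x b"
proof -
  interpret vector_space "osc P" using operad_vector_space[OF assms(1)] .
  have "osc P c a + b = osc P (c * aug P x a + aug P x b) (ounit P x)"
    by (subst aug_eq[OF assms(1-3)], subst aug_eq[OF assms(1,2,4)]) (simp add: scale_left_distrib)
  then show ?thesis using aug_scale[OF assms(1,2)] by simp
qed

lemma finite_fib [simp]: "finite (fib m f i)"
  unfolding fib_def by simp

lemma fib_bij: "bij_betw f {..<n} {..<n} \<Longrightarrow> i < n \<Longrightarrow> fib n f i = {the_inv_into {..<n} f i}"
  unfolding fib_def
  by (auto simp: bij_betw_def the_inv_into_f_f f_the_inv_into_f)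
    (metis lessThan_iff the_inv_into_into subset_refl imageI)

lemma gen_label_zero_outside_image:
  assumes "reduced P" "gen P m n f \<nu>s" "i < n" "i \<notin> f ` {..<m}"
  shows "\<nu>s i = 0"
proof -
  have "fib m f i = {}" using assms(4) unfolding fib_def by auto
  then show ?thesis using assms(1-3) unfolding gen_def reduced_def by (metis singletonD)
qed

lemma comp_ok_catcomp:
  assumes "gen P m n f \<nu>s" "gen P n p g \<nu>s'" "j < p"
  shows "comp_ok P (fib n g j) (fib m f) (\<nu>s' j) \<nu>s"
  using assms unfolding comp_ok_def pdisj_def gen_def by (auto simp: fib_def)

lemma gen_mu_map:
  assumes "is_operad P" "\<mu> \<in> ocar P {0, 1}" "i < n"
  shows "gen P (n + 1) n (mu_map n i) (mu_lab P \<mu> n i)"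
  unfolding gen_def
proof (intro conjI allI impI)
  fix x assume "x < n + 1" then show "mu_map n i x < n" using assms(3) by (simp add: mu_map_def)
next
  fix j assume "j < n"
  then have fib_j: "fib (n + 1) (mu_map n i) j = (if j = i then {i, n} else {j})"
    using assms(3) unfolding fib_def mu_map_def by auto
  let ?\<sigma> = "\<lambda>k::nat. if k = 0 then i else n"
  have "inj_on ?\<sigma> {0, 1}" and "?\<sigma> ` {0, 1} = {i, n}" using assms(3) by auto
  then have "orel P {0, 1} ?\<sigma> \<mu> \<in> ocar P {i, n}"
    using orel_in[OF assms(1), of "{0, 1}" ?\<sigma>] assms(2) by auto
  then show "mu_lab P \<mu> n i j \<in> ocar P (fib (n + 1) (mu_map n i) j)"
    using fib_j ounit_in[OF assms(1)] by (simp add: mu_lab_def)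
qed

lemma lfun_vector_space: "is_lfun P scV V Fm \<Longrightarrow> vector_space scV"
  unfolding is_lfun_def by (elim conjE)

lemma lfun_subspace [rule_format]: "is_lfun P scV V Fm \<Longrightarrow> \<forall>n. module.subspace scV (V n)"
  unfolding is_lfun_def by (elim conjE) assumption

lemma lfun_zero_in:
  assumes "is_lfun P scV V Fm"
  shows "0 \<in> V n"
proof -
  interpret vector_space scV using lfun_vector_space[OF assms] .
  show ?thesis using lfun_subspace[OF assms] subspace_0 by blast
qed

lemma lfun_gen [rule_format]:
  "is_lfun P scV V Fm \<Longrightarrow> \<forall>m n f \<nu>s. gen P m n f \<nu>s \<longrightarrow>
     (\<forall>v\<in>V m. Fm m n f \<nu>s v \<in> V n) \<and> lin_on scV scV (V m) (Fm m n f \<nu>s)"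
  unfolding is_lfun_def by (elim conjE) assumption

lemma lfun_label_linear [rule_format]:
  "is_lfun P scV V Fm \<Longrightarrow> \<forall>m n f \<nu>s i c a b. gen P m n f \<nu>s \<longrightarrow> i < n \<longrightarrow>
     a \<in> ocar P (fib m f i) \<longrightarrow> b \<in> ocar P (fib m f i) \<longrightarrow>
     (\<forall>v\<in>V m. Fm m n f (\<nu>s(i := osc P c a + b)) v =
        scV c (Fm m n f (\<nu>s(i := a)) v) + Fm m n f (\<nu>s(i := b)) v)"
  unfolding is_lfun_def by (elim conjE) assumption

lemma lfun_in: "is_lfun P scV V Fm \<Longrightarrow> gen P m n f \<nu>s \<Longrightarrow> v \<in> V m \<Longrightarrow> Fm m n f \<nu>s v \<in> V n"
  using lfun_gen by blast

lemma lfun_map_zero: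
  assumes "is_lfun P scV V Fm" "gen P m n f \<nu>s"
  shows "Fm m n f \<nu>s 0 = 0"
proof -
  have "Fm m n f \<nu>s (0 + 0) = Fm m n f \<nu>s 0 + Fm m n f \<nu>s 0"
    using lfun_gen[OF assms] lfun_zero_in[OF assms(1)] unfolding lin_on_def by blast
  then show ?thesis by simp
qed

lemma lfun_label_zero:
  assumes "is_lfun P scV V Fm" "is_operad P" "gen P m n f \<nu>s" "i < n" "\<nu>s i = 0" "v \<in> V m"
  shows "Fm m n f \<nu>s v = 0"
proof -
  interpret vector_space scV using lfun_vector_space[OF assms(1)] .
  interpret O: vector_space "osc P" using operad_vector_space[OF assms(2)] .
  have zero: "0 \<in> ocar P (fib m f i)" using operad_zero_in[OF assms(2)] by simp
  have "Fm m n f (\<nu>s(i := osc P 1 0 + 0)) v = scV 1 (Fm m n f (\<nu>s(i := 0)) v) + Fm m n f (\<nu>s(i := 0)) v"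
    by (rule lfun_label_linear[OF assms(1,3,4) zero zero assms(6)])
  moreover have "\<nu>s(i := 0) = \<nu>s" using assms(5) by auto
  ultimately show ?thesis by simp
qed

lemma lfun_arity_increase_zero:
  assumes "is_lfun P scV V Fm" "is_operad P" "reduced P" "gen P m n f \<nu>s" "m < n" "v \<in> V m"
  shows "Fm m n f \<nu>s v = 0"
proof -
  have "card (f ` {..<m}) < card {..<n}" using card_image_le[of "{..<m}" f] assms(5) by simp
  then obtain i where "i < n" "i \<notin> f ` {..<m}"
    by (metis card_mono finite_imageI finite_lessThan lessThan_iff not_le subsetI)
  then show ?thesis
    using lfun_label_zero[OF assms(1,2,4)] gen_label_zero_outside_image[OF assms(3,4)] assms(6) by blast
qed

lemma truncation_subfunctor:
  assumes "is_lfun P scV V Fm" "is_operad P" "reduced P"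
  shows "is_subfunctor P scV V Fm (\<lambda>k. if k \<le> n then V k else {0})"
  unfolding is_subfunctor_def
proof (intro conjI allI impI ballI)
  interpret vector_space scV using lfun_vector_space[OF assms(1)] .
  fix k
  show "subspace (if k \<le> n then V k else {0})"
    using lfun_subspace[OF assms(1)] by (simp add: subspace_def)
  show "(if k \<le> n then V k else {0}) \<subseteq> V k" using lfun_zero_in[OF assms(1)] by auto
next
  fix a b f \<nu>s w
  assume gen: "gen P a b f \<nu>s" and w: "w \<in> (if a \<le> n then V a else {0})"
  show "Fm a b f \<nu>s w \<in> (if b \<le> n then V b else {0})"
  proof (cases "a \<le> n")
    case True
    then have "w \<in> V a" using w by simp
    then show ?thesis
      using True lfun_in[OF assms(1) gen] lfun_arity_increase_zero[OF assms gen] by auto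
  next
    case False
    then show ?thesis using w lfun_map_zero[OF assms(1) gen] lfun_zero_in[OF assms(1)] by simp
  qed
qed

lemma simple_obj_in_Fmu:
  assumes "simple_obj P scV V Fm" "is_operad P" "reduced P" "\<mu> \<in> ocar P {0, 1}"
  shows "in_Fmu P \<mu> scV V Fm"
proof -
  have lfun: "is_lfun P scV V Fm" using assms(1) unfolding simple_obj_def by blast
  have "mu_tilde P \<mu> Fm n v = 0" if v: "v \<in> V (n + 1)" for n v
  proof -
    have "(\<forall>k. (if k \<le> n then V k else {0}) = {0}) \<or> (\<forall>k. (if k \<le> n then V k else {0}) = V k)"
      using assms(1) truncation_subfunctor[OF lfun assms(2,3)] unfolding simple_obj_def by blast
    then consider "V n = {0}" | "V (n + 1) = {0}" by (metis Suc_eq_plus1 not_less_eq_eq order_refl)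
    moreover have "gen P (n + 1) n (mu_map n i) (mu_lab P \<mu> n i)" if "i < n" for i
      using gen_mu_map[OF assms(2,4) that] .
    ultimately have "Fm (n + 1) n (mu_map n i) (mu_lab P \<mu> n i) v = 0" if "i < n" for i
      using that lfun_in[OF lfun _ v] lfun_map_zero[OF lfun] v by cases auto
    then show ?thesis unfolding mu_tilde_def by simp
  qed
  then show ?thesis using lfun unfolding in_Fmu_def by blast
qed

lemma sigma_mod_vector_space: "is_sigma_mod scV V act \<Longrightarrow> vector_space scV"
  unfolding is_sigma_mod_def by (elim conjE)

lemma sigma_mod_subspace [rule_format]: "is_sigma_mod scV V act \<Longrightarrow> \<forall>n. module.subspace scV (V n)"
  unfolding is_sigma_mod_def by (elim conjE) assumption

lemma sigma_mod_act [rule_format]: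
  "is_sigma_mod scV V act \<Longrightarrow> \<forall>n \<sigma>. bij_betw \<sigma> {..<n} {..<n} \<longrightarrow>
     (\<forall>v\<in>V n. act n \<sigma> v \<in> V n) \<and> lin_on scV scV (V n) (act n \<sigma>)"
  unfolding is_sigma_mod_def by (elim conjE) assumption

lemma sigma_mod_cong [rule_format]:
  "is_sigma_mod scV V act \<Longrightarrow> \<forall>n \<sigma> \<sigma>'. (\<forall>x<n. \<sigma> x = \<sigma>' x) \<longrightarrow> (\<forall>v\<in>V n. act n \<sigma> v = act n \<sigma>' v)"
  unfolding is_sigma_mod_def by (elim conjE) assumption

lemma sigma_mod_id [rule_format]: "is_sigma_mod scV V act \<Longrightarrow> \<forall>n. \<forall>v\<in>V n. act n id v = v"
  unfolding is_sigma_mod_def by (elim conjE) assumption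

lemma sigma_mod_comp [rule_format]:
  "is_sigma_mod scV V act \<Longrightarrow> \<forall>n \<sigma> \<tau>. bij_betw \<sigma> {..<n} {..<n} \<longrightarrow> bij_betw \<tau> {..<n} {..<n} \<longrightarrow>
     (\<forall>v\<in>V n. act n \<sigma> (act n \<tau> v) = act n (\<sigma> \<circ> \<tau>) v)"
  unfolding is_sigma_mod_def by (elim conjE) assumption

lemma sigma_mod_act_zero:
  assumes "is_sigma_mod scV V act" "bij_betw \<sigma> {..<n} {..<n}"
  shows "act n \<sigma> 0 = 0"
proof -
  interpret vector_space scV using sigma_mod_vector_space[OF assms(1)] .
  have "0 \<in> V n" using sigma_mod_subspace[OF assms(1)] subspace_0 by blast
  then have "act n \<sigma> (0 + 0) = act n \<sigma> 0 + act n \<sigma> 0"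
    using sigma_mod_act[OF assms] unfolding lin_on_def by blast
  then show ?thesis by simp
qed

(* the coefficient of f in the image of (f, \<nu>s) under Cat O(n, n) -> k[S_n] induced by the augmentation *)
definition aug_coeff :: "('k::comm_monoid_mult, 'o) operad \<Rightarrow> nat \<Rightarrow> (nat \<Rightarrow> nat) \<Rightarrow> (nat \<Rightarrow> 'o) \<Rightarrow> 'k"
  where "aug_coeff P n f \<nu>s = (\<Prod>i<n. aug P (the_inv_into {..<n} f i) (\<nu>s i))"

lemma aug_coeff_cong:
  assumes "bij_betw f {..<n} {..<n}" "\<forall>x<n. f x = f' x" "\<forall>i<n. \<nu>s i = \<nu>s' i"
  shows "aug_coeff P n f' \<nu>s' = aug_coeff P n f \<nu>s"
proof -
  have "inj_on f' {..<n}" "f' ` {..<n} = {..<n}"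
    using assms(1,2) bij_betw_cong[of "{..<n}" f f'] by (auto simp: bij_betw_def)
  have "the_inv_into {..<n} f' i = the_inv_into {..<n} f i" if "i < n" for i
  proof -
    have "the_inv_into {..<n} f i < n"
      using bij_betw_apply[OF bij_betw_the_inv_into[OF assms(1)]] that by simp
    moreover have "f (the_inv_into {..<n} f i) = i" using f_the_inv_into_f_bij_betw[OF assms(1)] that by simp
    ultimately show ?thesis using \<open>inj_on f' {..<n}\<close> assms(2) by (intro the_inv_into_f_eq) auto
  qed
  then show ?thesis unfolding aug_coeff_def using assms(3) by (intro prod.cong) auto
qed

lemma aug_coeff_id: "is_operad P \<Longrightarrow> arity_one_unit P \<Longrightarrow> aug_coeff P n id (ounit P) = 1"
  unfolding aug_coeff_def by (simp add: aug_unit the_inv_into_f_eq)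

lemma aug_coeff_zero:
  "is_operad P \<Longrightarrow> arity_one_unit P \<Longrightarrow> i < n \<Longrightarrow> \<nu>s i = 0 \<Longrightarrow> aug_coeff P n f \<nu>s = 0"
  unfolding aug_coeff_def by (force simp: aug_zero prod_zero_iff)

lemma aug_coeff_label_linear:
  assumes "is_operad P" "arity_one_unit P" "bij_betw f {..<n} {..<n}" "i < n"
    and "a \<in> ocar P (fib n f i)" "b \<in> ocar P (fib n f i)"
  shows "aug_coeff P n f (\<nu>s(i := osc P c a + b)) =
    c * aug_coeff P n f (\<nu>s(i := a)) + aug_coeff P n f (\<nu>s(i := b))"
proof -
  define x where "x = the_inv_into {..<n} f i"
  define rest where "rest = (\<Prod>j\<in>{..<n} - {i}. aug P (the_inv_into {..<n} f j) (\<nu>s j))"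
  have split: "aug_coeff P n f (\<nu>s(i := w)) = aug P x w * rest" for w
    unfolding aug_coeff_def rest_def x_def using assms(4)
    by (subst prod.remove[of _ i]) (auto intro: prod.cong)
  have "aug P x (osc P c a + b) = c * aug P x a + aug P x b"
    using aug_linear[OF assms(1,2)] assms(5,6) fib_bij[OF assms(3,4)] by (simp add: x_def)
  then show ?thesis unfolding split by (simp add: distrib_right mult.assoc)
qed

lemma aug_catcomp_bij:
  assumes "is_operad P" "arity_one_unit P"
    and f: "bij_betw f {..<n} {..<n}" and g: "bij_betw g {..<n} {..<n}"
    and "gen P n n f \<nu>s" "gen P n n g \<nu>s'" "j < n"
  defines "i \<equiv> the_inv_into {..<n} g j"
  shows "aug P (the_inv_into {..<n} (g \<circ> f) j) (catcomp P n n g \<nu>s' f \<nu>s j)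
    = aug P i (\<nu>s' j) * aug P (the_inv_into {..<n} f i) (\<nu>s i)"
proof -
  interpret vector_space "osc P" using operad_vector_space[OF assms(1)] .
  define x where "x = the_inv_into {..<n} f i"
  have i: "i < n" using bij_betw_apply[OF bij_betw_the_inv_into[OF g]] assms(7) by (simp add: i_def)
  have fib_g: "fib n g j = {i}" using fib_bij[OF g assms(7)] by (simp add: i_def)
  have fib_f: "fib n f i = {x}" using fib_bij[OF f i] by (simp add: x_def)
  have \<nu>s'_j: "\<nu>s' j \<in> ocar P {i}" and \<nu>s_i: "\<nu>s i \<in> ocar P {x}"
    using assms(5-7) i fib_g fib_f unfolding gen_def by auto
  have "catcomp P n n g \<nu>s' f \<nu>s j = ocomp P {i} (fib n f) (osc P (aug P i (\<nu>s' j)) (ounit P i)) \<nu>s"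
    unfolding catcomp_def fib_g by (subst aug_eq[OF assms(1,2) \<nu>s'_j]) (rule refl)
  also have "\<dots> = osc P (aug P i (\<nu>s' j)) (\<nu>s i)"
    using ocomp_scaled_unit_left[OF assms(1)] \<nu>s_i fib_f by simp
  also have "\<dots> = osc P (aug P i (\<nu>s' j) * aug P x (\<nu>s i)) (ounit P x)"
    by (subst aug_eq[OF assms(1,2) \<nu>s_i]) simp
  finally have "catcomp P n n g \<nu>s' f \<nu>s j = osc P (aug P i (\<nu>s' j) * aug P x (\<nu>s i)) (ounit P x)" .
  moreover have "the_inv_into {..<n} (g \<circ> f) j = x"
    using the_inv_into_comp[of g f "{..<n}" j] f g assms(7)
    by (simp add: bij_betw_def x_def i_def)
  ultimately show ?thesis using aug_scale[OF assms(1,2)] by (simp add: x_def)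
qed

lemma aug_coeff_catcomp:
  assumes "is_operad P" "arity_one_unit P"
    and f: "bij_betw f {..<n} {..<n}" and g: "bij_betw g {..<n} {..<n}"
    and "gen P n n f \<nu>s" "gen P n n g \<nu>s'"
  shows "aug_coeff P n (g \<circ> f) (catcomp P n n g \<nu>s' f \<nu>s) = aug_coeff P n g \<nu>s' * aug_coeff P n f \<nu>s"
proof -
  let ?g' = "the_inv_into {..<n} g"
  let ?B = "\<lambda>i. aug P (the_inv_into {..<n} f i) (\<nu>s i)"
  have "aug_coeff P n (g \<circ> f) (catcomp P n n g \<nu>s' f \<nu>s) = (\<Prod>j<n. aug P (?g' j) (\<nu>s' j) * ?B (?g' j))"
    unfolding aug_coeff_def using aug_catcomp_bij[OF assms] by (intro prod.cong) auto
  also have "\<dots> = aug_coeff P n g \<nu>s' * (\<Prod>j<n. ?B (?g' j))"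
    unfolding aug_coeff_def by (rule prod.distrib)
  also have "(\<Prod>j<n. ?B (?g' j)) = aug_coeff P n f \<nu>s"
    unfolding aug_coeff_def by (rule prod.reindex_bij_betw[OF bij_betw_the_inv_into[OF g]])
  finally show ?thesis .
qed

lemma catcomp_zero_outside_image:
  assumes "is_operad P" "reduced P" "gen P m n f \<nu>s" "gen P n p g \<nu>s'" "i < n" "i \<notin> f ` {..<m}"
  shows "catcomp P m n g \<nu>s' f \<nu>s (g i) = 0"
proof -
  have "g i < p" using assms(4,5) by (simp add: gen_def)
  then show ?thesis
    unfolding catcomp_def using assms(5) gen_label_zero_outside_image[OF assms(2,3,5,6)]
    by (intro ocomp_zero_right[OF assms(1) comp_ok_catcomp[OF assms(3,4)]]) (simp_all add: fib_def)
qed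

lemma comp_bij_factor_not_surj:
  fixes f g :: "nat \<Rightarrow> nat"
  assumes "bij_betw (g \<circ> f) {..<m} {..<m}" "f ` {..<m} \<subseteq> {..<n}" "\<not> (m = n \<and> bij_betw f {..<n} {..<n})"
  shows "\<exists>i<n. i \<notin> f ` {..<m}"
proof (rule ccontr)
  assume "\<not> ?thesis"
  with assms(2) have "f ` {..<m} = {..<n}" by auto
  moreover have "inj_on f {..<m}" using assms(1) inj_on_imageI2 by (auto simp: bij_betw_def)
  ultimately have "bij_betw f {..<m} {..<n}" by (simp add: bij_betw_def)
  moreover from this have "card {..<m} = card {..<n}" by (rule bij_betw_same_card)
  ultimately show False using assms(3) by simp
qed

lemma alpha_bij:
  "bij_betw f {..<n} {..<n} \<Longrightarrow> alpha P scV act n n f \<nu>s v = scV (aug_coeff P n f \<nu>s) (act n f v)"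
  by (simp add: alpha_def aug_coeff_def)

lemma alpha_nonbij: "\<not> (m = n \<and> bij_betw f {..<n} {..<n}) \<Longrightarrow> alpha P scV act m n f \<nu>s v = 0"
  unfolding alpha_def by (rule if_not_P)

lemma alpha_zero:
  assumes "is_sigma_mod scV V act"
  shows "alpha P scV act m n f \<nu>s 0 = 0"
proof -
  interpret vector_space scV using sigma_mod_vector_space[OF assms] .
  show ?thesis
    by (cases "m = n \<and> bij_betw f {..<n} {..<n}") (auto simp: alpha_bij alpha_nonbij sigma_mod_act_zero[OF assms])
qed

lemma alpha_in_linear:
  assumes "is_sigma_mod scV V act"
  shows "(\<forall>v\<in>V m. alpha P scV act m n f \<nu>s v \<in> V n) \<and> lin_on scV scV (V m) (alpha P scV act m n f \<nu>s)"
proof -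
  interpret vector_space scV using sigma_mod_vector_space[OF assms] .
  show ?thesis
  proof (cases "m = n \<and> bij_betw f {..<n} {..<n}")
    case True
    then show ?thesis
      using sigma_mod_subspace[OF assms] sigma_mod_act[OF assms]
      by (auto simp: alpha_bij lin_on_def subspace_scale scale_right_distrib scale_left_commute)
  next
    case False
    then show ?thesis using sigma_mod_subspace[OF assms] subspace_0 by (simp add: alpha_nonbij lin_on_def)
  qed
qed

lemma alpha_cong:
  assumes "is_sigma_mod scV V act" "\<forall>x<m. f x = f' x" "\<forall>i<n. \<nu>s i = \<nu>s' i" "v \<in> V m"
  shows "alpha P scV act m n f' \<nu>s' v = alpha P scV act m n f \<nu>s v"
proof (cases "m = n \<and> bij_betw f {..<n} {..<n}")
  case True
  then have mn: "m = n" and bij: "bij_betw f {..<n} {..<n}" by auto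
  have "bij_betw f' {..<n} {..<n}" using bij assms(2) mn bij_betw_cong[of "{..<n}" f f'] by auto
  moreover have "aug_coeff P n f' \<nu>s' = aug_coeff P n f \<nu>s" using mn assms(2,3) by (intro aug_coeff_cong[OF bij]) auto
  moreover have "act n f' v = act n f v" using sigma_mod_cong[OF assms(1)] assms(2,4) mn by metis
  ultimately show ?thesis using bij mn by (simp add: alpha_bij)
next
  case False
  moreover from this have "\<not> (m = n \<and> bij_betw f' {..<n} {..<n})"
    using assms(2) bij_betw_cong[of "{..<n}" f f'] by auto
  ultimately show ?thesis by (simp add: alpha_nonbij)
qed

lemma alpha_id:
  assumes "is_sigma_mod scV V act" "is_operad P" "arity_one_unit P" "v \<in> V n"
  shows "alpha P scV act n n id (ounit P) v = v"
proof -
  interpret vector_space scV using sigma_mod_vector_space[OF assms(1)] .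
  show ?thesis using assms by (simp add: alpha_bij aug_coeff_id sigma_mod_id)
qed

lemma alpha_label_linear:
  assumes "is_sigma_mod scV V act" "is_operad P" "arity_one_unit P"
    and "i < n" "a \<in> ocar P (fib m f i)" "b \<in> ocar P (fib m f i)"
  shows "alpha P scV act m n f (\<nu>s(i := osc P c a + b)) v =
    scV c (alpha P scV act m n f (\<nu>s(i := a)) v) + alpha P scV act m n f (\<nu>s(i := b)) v"
proof -
  interpret vector_space scV using sigma_mod_vector_space[OF assms(1)] .
  show ?thesis
  proof (cases "m = n \<and> bij_betw f {..<n} {..<n}")
    case True
    then show ?thesis using aug_coeff_label_linear[OF assms(2,3) _ assms(4)] assms(5,6)
      by (simp add: alpha_bij scale_left_distrib)
  qed (simp add: alpha_nonbij)
qed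

lemma alpha_comp_bij:
  assumes sm: "is_sigma_mod scV V act" and op: "is_operad P" "arity_one_unit P"
    and bf: "bij_betw f {..<n} {..<n}" and bg: "bij_betw g {..<n} {..<n}"
    and "gen P n n f \<nu>s" "gen P n n g \<nu>s'" and v: "v \<in> V n"
  shows "alpha P scV act n n g \<nu>s' (alpha P scV act n n f \<nu>s v) =
         alpha P scV act n n (g \<circ> f) (catcomp P n n g \<nu>s' f \<nu>s) v"
proof -
  interpret vector_space scV using sigma_mod_vector_space[OF sm] .
  have "act n g (scV c (act n f v)) = scV c (act n g (act n f v))" for c
    using sigma_mod_act[OF sm bg] sigma_mod_act[OF sm bf] v unfolding lin_on_def by blast
  moreover have "act n g (act n f v) = act n (g \<circ> f) v" using sigma_mod_comp[OF sm bg bf v] .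
  ultimately show ?thesis
    using aug_coeff_catcomp[OF op bf bg assms(6,7)] bij_betw_trans[OF bf bg] by (simp add: alpha_bij bf bg)
qed

lemma alpha_comp:
  assumes sm: "is_sigma_mod scV V act" and op: "is_operad P" "arity_one_unit P" "reduced P"
    and f: "gen P m n f \<nu>s" and g: "gen P n p g \<nu>s'" and v: "v \<in> V m"
  shows "alpha P scV act n p g \<nu>s' (alpha P scV act m n f \<nu>s v) =
         alpha P scV act m p (g \<circ> f) (catcomp P m n g \<nu>s' f \<nu>s) v"
proof -
  interpret vector_space scV using sigma_mod_vector_space[OF sm] .
  show ?thesis
  proof (cases "m = n \<and> bij_betw f {..<n} {..<n}")
    case f_bij: True
    show ?thesis
    proof (cases "p = n \<and> bij_betw g {..<n} {..<n}")
      case True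
      then show ?thesis using f_bij alpha_comp_bij[OF sm op(1,2)] f g v by auto
    next
      case False
      then have "\<not> (n = p \<and> bij_betw g {..<p} {..<p})" by auto
      moreover have "\<not> (m = p \<and> bij_betw (g \<circ> f) {..<p} {..<p})"
        using False f_bij bij_betw_comp_iff by blast
      ultimately show ?thesis by (simp add: alpha_nonbij)
    qed
  next
    case False
    have "alpha P scV act m p (g \<circ> f) (catcomp P m n g \<nu>s' f \<nu>s) v = 0"
    proof (cases "m = p \<and> bij_betw (g \<circ> f) {..<p} {..<p}")
      case True
      moreover have "f ` {..<m} \<subseteq> {..<n}" using f by (auto simp: gen_def)
      ultimately obtain i where "i < n" "i \<notin> f ` {..<m}"
        using comp_bij_factor_not_surj False by metis
      moreover from this have "g i < p" using g by (simp add: gen_def)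
      ultimately show ?thesis
        using True catcomp_zero_outside_image[OF op(1,3) f g] aug_coeff_zero[OF op(1,2)]
        by (simp add: alpha_bij)
    qed (simp add: alpha_nonbij)
    then show ?thesis using False alpha_zero[OF sm] by (simp add: alpha_nonbij)
  qed
qed

lemma alpha_lfun:
  assumes "is_sigma_mod scV V act" "is_operad P" "arity_one_unit P" "reduced P"
  shows "is_lfun P scV V (alpha P scV act)"
  unfolding is_lfun_def
proof (intro conjI allI impI ballI)
  show "vector_space scV" by (rule sigma_mod_vector_space[OF assms(1)])
  show "module.subspace scV (V n)" for n by (rule sigma_mod_subspace[OF assms(1)])
  show "alpha P scV act m n f \<nu>s v \<in> V n" if "v \<in> V m" for m n f \<nu>s v
    using alpha_in_linear[OF assms(1)] that by blast
  show "lin_on scV scV (V m) (alpha P scV act m n f \<nu>s)" for m n f \<nu>s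
    using alpha_in_linear[OF assms(1)] by blast
  show "alpha P scV act m n f' \<nu>s' v = alpha P scV act m n f \<nu>s v"
    if "\<forall>x<m. f x = f' x" "\<forall>i<n. \<nu>s i = \<nu>s' i" "v \<in> V m" for m n f f' \<nu>s \<nu>s' v
    using alpha_cong[OF assms(1) that] .
  show "alpha P scV act m n f (\<nu>s(i := osc P c a + b)) v =
      scV c (alpha P scV act m n f (\<nu>s(i := a)) v) + alpha P scV act m n f (\<nu>s(i := b)) v"
    if "i < n" "a \<in> ocar P (fib m f i)" "b \<in> ocar P (fib m f i)" for m n f \<nu>s i c a b v
    using alpha_label_linear[OF assms(1-3) that] .
  show "alpha P scV act n n id (ounit P) v = v" if "v \<in> V n" for n v
    using alpha_id[OF assms(1-3) that] .
  show "alpha P scV act n p g \<nu>s' (alpha P scV act m n f \<nu>s v) =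
      alpha P scV act m p (g \<circ> f) (catcomp P m n g \<nu>s' f \<nu>s) v"
    if "gen P m n f \<nu>s" "gen P n p g \<nu>s'" "v \<in> V m" for m n p f \<nu>s g \<nu>s' v
    using alpha_comp[OF assms that] .
qed

lemma alpha_in_Fmu:
  assumes "is_sigma_mod scV V act" "is_operad P" "arity_one_unit P" "reduced P"
  shows "in_Fmu P \<mu> scV V (alpha P scV act)"
  using alpha_lfun[OF assms] by (simp add: in_Fmu_def mu_tilde_def alpha_nonbij)

theorem proposition3p9:
  fixes P :: "('k::field, 'o::ab_group_add) operad" and \<mu> :: 'o
  assumes "is_operad P"
    and "reduced P"
    and "arity_one_unit P"
    and "\<mu> \<in> ocar P {0, 1}"
    and "right_leibniz P \<mu>"
  shows "(\<forall>(scV :: 'k \<Rightarrow> 'v::ab_group_add \<Rightarrow> 'v) V act. is_sigma_mod scV V act \<longrightarrow>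
            in_Fmu P \<mu> scV V (alpha P scV act))
       \<and> (\<forall>(scV :: 'k \<Rightarrow> 'v \<Rightarrow> 'v) V Fm. simple_obj P scV V Fm \<longrightarrow> in_Fmu P \<mu> scV V Fm)"
  using alpha_in_Fmu[OF _ assms(1,3,2)] simple_obj_in_Fmu[OF _ assms(1,2,4)] by blast

end
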